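(* Let $A$ (in $\mathcal H$) and $B$ (in $\mathcal K$) be closed densely defined operators with $A\dashv B$, with a (possibly unbounded) intertwining operator $T$. Then: (i) $\sigma_p(A)\subseteq\sigma_p(B)$; more precisely, if $\xi\in D(A)$ is an eigenvector of $A$ with eigenvalue $\lambda$, then $T\xi$ is an eigenvector of $B$ with eigenvalue $\lambda$, and for every $\lambda\in\sigma_p(A)$ one has $m_A(\lambda)\le m_B(\lambda)$, where $m_C(\lambda)$ denotes the multiplicity of $\lambda$ as an eigenvalue of $C$. (ii) If $TD(A)=D(B)$ and $T^{-1}$ is bounded, then $\sigma_p(A)=\sigma_p(B)$. (iii) If $T^{-1}$ is bounded and $TD(A)$ is a core for $B$, then $\sigma_p(B)\subseteq\sigma(A)$.
   Context: A closed, densely defined operator $T:\mathcal H\to\mathcal K$ is called an intertwining operator for $A$ and $B$ if: (io$_0$) $D(A)\subset D(T)$ and $D(TA)=D(A)$, i.e. $\xi\in D(A)$ implies $A\xi\in D(T)$; (io$_1$) $T$ maps $D(A)$ into $D(B)$; (io$_2$) $BT\xi=TA\xi$ for all $\xi\in D(A)$. We write $A\dashv B$ ($A$ is quasi-similar to $B$) if there exists an intertwining operator $T$ for $A$ and $B$ which is injective and whose inverse $T^{-1}$ (defined on the range of $T$) is densely defined. $\sigma_p$ denotes the point spectrum (set of eigenvalues), $\sigma$ the spectrum. "$T^{-1}$ bounded" means bounded on its domain, the range of $T$. *)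

theory Defs
  imports "HOL-Analysis.Analysis" "HOL-Library.Extended_Nat"
begin

text \<open>HOL has no complex vector spaces; we introduce complex normed spaces and
complex inner product spaces as type classes (Hilbert space = complex_inner + complete_space).\<close>
class complex_normed_vector = real_normed_vector +
  fixes scaleC :: "complex \<Rightarrow> 'a \<Rightarrow> 'a" (infixr \<open>*\<^sub>C\<close> 75)
  assumes scaleC_add_right: "a *\<^sub>C (x + y) = a *\<^sub>C x + a *\<^sub>C y"
    and scaleC_add_left: "(a + b) *\<^sub>C x = a *\<^sub>C x + b *\<^sub>C x"
    and scaleC_scaleC: "a *\<^sub>C (b *\<^sub>C x) = (a * b) *\<^sub>C x"
    and scaleC_one: "1 *\<^sub>C x = x"
    and scaleC_of_real: "complex_of_real r *\<^sub>C x = r *\<^sub>R x"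
    and norm_scaleC: "norm (a *\<^sub>C x) = cmod a * norm x"

class complex_inner = complex_normed_vector +
  fixes cinner :: "'a \<Rightarrow> 'a \<Rightarrow> complex"
  assumes cinner_commute: "cinner x y = cnj (cinner y x)"
    and cinner_add_left: "cinner (x + y) z = cinner x z + cinner y z"
    and cinner_scaleC_left: "cinner (a *\<^sub>C x) y = cnj a * cinner x y"
    and norm_eq_sqrt_cinner: "cinner x x = complex_of_real ((norm x)\<^sup>2)"

type_synonym ('a, 'b) linop = "'a set \<times> ('a \<Rightarrow> 'b)"

definition dom :: "('a, 'b) linop \<Rightarrow> 'a set" where "dom T = fst T"
definition app :: "('a, 'b) linop \<Rightarrow> 'a \<Rightarrow> 'b" where "app T = snd T"

definition is_linop :: "('a::complex_normed_vector, 'b::complex_normed_vector) linop \<Rightarrow> bool" where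
  "is_linop T \<longleftrightarrow> 0 \<in> dom T
     \<and> (\<forall>x\<in>dom T. \<forall>y\<in>dom T. x + y \<in> dom T \<and> app T (x + y) = app T x + app T y)
     \<and> (\<forall>c::complex. \<forall>x\<in>dom T. c *\<^sub>C x \<in> dom T \<and> app T (c *\<^sub>C x) = c *\<^sub>C app T x)"

definition graph :: "('a, 'b) linop \<Rightarrow> ('a \<times> 'b) set" where
  "graph T = {(x, app T x) | x. x \<in> dom T}"

definition closed_op :: "('a::complex_normed_vector, 'b::complex_normed_vector) linop \<Rightarrow> bool" where
  "closed_op T \<longleftrightarrow> is_linop T \<and> closed (graph T)"

definition densely_defined :: "('a::complex_normed_vector, 'b) linop \<Rightarrow> bool" where
  "densely_defined T \<longleftrightarrow> closure (dom T) = UNIV"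

definition intertwining ::
  "('a::complex_normed_vector, 'b::complex_normed_vector) linop \<Rightarrow> ('a, 'a) linop \<Rightarrow> ('b, 'b) linop \<Rightarrow> bool" where
  "intertwining T A B \<longleftrightarrow> closed_op T \<and> densely_defined T
     \<and> dom A \<subseteq> dom T \<and> (\<forall>\<xi>\<in>dom A. app A \<xi> \<in> dom T)
     \<and> (\<forall>\<xi>\<in>dom A. app T \<xi> \<in> dom B)
     \<and> (\<forall>\<xi>\<in>dom A. app B (app T \<xi>) = app T (app A \<xi>))"

text \<open>T injective with densely defined inverse (inverse defined on the range of T).\<close>
definition inj_dense_inverse :: "('a::complex_normed_vector, 'b::complex_normed_vector) linop \<Rightarrow> bool" where
  "inj_dense_inverse T \<longleftrightarrow> inj_on (app T) (dom T) \<and> closure (app T ` dom T) = UNIV"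

definition quasi_similar :: "('a::complex_normed_vector, 'a) linop \<Rightarrow> ('b::complex_normed_vector, 'b) linop \<Rightarrow> bool" where
  "quasi_similar A B \<longleftrightarrow> (\<exists>T. intertwining T A B \<and> inj_dense_inverse T)"

definition inverse_bounded :: "('a::complex_normed_vector, 'b::complex_normed_vector) linop \<Rightarrow> bool" where
  "inverse_bounded T \<longleftrightarrow> (\<exists>C. \<forall>\<xi>\<in>dom T. norm \<xi> \<le> C * norm (app T \<xi>))"

definition eigenvector :: "('a::complex_normed_vector, 'a) linop \<Rightarrow> complex \<Rightarrow> 'a \<Rightarrow> bool" where
  "eigenvector A \<mu> \<xi> \<longleftrightarrow> \<xi> \<in> dom A \<and> \<xi> \<noteq> 0 \<and> app A \<xi> = \<mu> *\<^sub>C \<xi>"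

definition point_spectrum :: "('a::complex_normed_vector, 'a) linop \<Rightarrow> complex set" where
  "point_spectrum A = {\<mu>. \<exists>\<xi>. eigenvector A \<mu> \<xi>}"

definition eigenspace :: "('a::complex_normed_vector, 'a) linop \<Rightarrow> complex \<Rightarrow> 'a set" where
  "eigenspace A \<mu> = {\<xi> \<in> dom A. app A \<xi> = \<mu> *\<^sub>C \<xi>}"

definition c_independent :: "'a::complex_normed_vector set \<Rightarrow> bool" where
  "c_independent S \<longleftrightarrow> (\<forall>u. (\<Sum>v\<in>S. u v *\<^sub>C v) = 0 \<longrightarrow> (\<forall>v\<in>S. u v = 0))"

text \<open>Multiplicity = (complex) dimension of the eigenspace, \<infinity> if infinite-dimensional.\<close>
definition multiplicity :: "('a::complex_normed_vector, 'a) linop \<Rightarrow> complex \<Rightarrow> enat" where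
  "multiplicity A \<mu> =
     (SUP S \<in> {S. finite S \<and> S \<subseteq> eigenspace A \<mu> \<and> c_independent S}. enat (card S))"

definition resolvent_set :: "('a::complex_normed_vector, 'a) linop \<Rightarrow> complex set" where
  "resolvent_set A = {\<mu>. bij_betw (\<lambda>x. app A x - \<mu> *\<^sub>C x) (dom A) UNIV
      \<and> (\<exists>C. \<forall>x\<in>dom A. norm x \<le> C * norm (app A x - \<mu> *\<^sub>C x))}"

definition spectrum :: "('a::complex_normed_vector, 'a) linop \<Rightarrow> complex set" where
  "spectrum A = - resolvent_set A"

definition is_core :: "'b set \<Rightarrow> ('b::complex_normed_vector, 'b) linop \<Rightarrow> bool" where
  "is_core D B \<longleftrightarrow> D \<subseteq> dom B \<and> graph B \<subseteq> closure {(x, app B x) | x. x \<in> D}"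

end

theory Submission
  imports Defs
begin

text \<open>Everything but the last inclusion is pure algebra: T maps the eigenspace of A for \<mu>
injectively and linearly into that of B, so eigenvectors, point spectrum and (via images of
independent sets) multiplicities are carried over; if T maps D(A) onto D(B), injectivity pulls
eigenvectors of B back to A. For the last inclusion, let B \<eta> = \<mu> \<eta> with \<eta> \<noteq> 0 and suppose
\<mu> lies in the resolvent set of A. Since T D(A) is a core, there are x_n in D(A) with
T x_n \<rightarrow> \<eta> and B T x_n \<rightarrow> \<mu> \<eta>, hence T (A - \<mu>) x_n = (B - \<mu>) T x_n \<rightarrow> 0. Boundedness of
the inverse of T and of the resolvent give x_n \<rightarrow> 0, and closedness of T forces \<eta> = 0.\<close>

lemma scaleC_zero_left [simp]: "(0::complex) *\<^sub>C (x::'a::complex_normed_vector) = 0"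
  using scaleC_of_real[of 0 x] by simp

lemma scaleC_minus_one: "(-1::complex) *\<^sub>C (x::'a::complex_normed_vector) = - x"
  using scaleC_of_real[of "-1" x] by simp

lemma bounded_linear_scaleC: "bounded_linear (\<lambda>x::'a::complex_normed_vector. a *\<^sub>C x)"
proof (rule bounded_linear_intro[where K = "cmod a"])
  fix r and x :: 'a
  have "a *\<^sub>C (r *\<^sub>R x) = (complex_of_real r * a) *\<^sub>C x"
    by (simp flip: scaleC_of_real add: scaleC_scaleC mult.commute)
  then show "a *\<^sub>C (r *\<^sub>R x) = r *\<^sub>R (a *\<^sub>C x)"
    by (simp flip: scaleC_of_real add: scaleC_scaleC)
qed (simp_all add: scaleC_add_right norm_scaleC mult.commute)

lemma is_linop_zero: "is_linop T \<Longrightarrow> 0 \<in> dom T"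
  unfolding is_linop_def by blast

lemma is_linop_add:
  "is_linop T \<Longrightarrow> x \<in> dom T \<Longrightarrow> y \<in> dom T \<Longrightarrow> x + y \<in> dom T \<and> app T (x + y) = app T x + app T y"
  unfolding is_linop_def by blast

lemma is_linop_scaleC:
  "is_linop T \<Longrightarrow> x \<in> dom T \<Longrightarrow> c *\<^sub>C x \<in> dom T \<and> app T (c *\<^sub>C x) = c *\<^sub>C app T x"
  unfolding is_linop_def by blast

lemma is_linop_app_zero: "is_linop T \<Longrightarrow> app T 0 = 0"
  using is_linop_scaleC[of T 0 0] is_linop_zero[of T] by auto

lemma is_linop_diff:
  "is_linop T \<Longrightarrow> x \<in> dom T \<Longrightarrow> y \<in> dom T \<Longrightarrow> x - y \<in> dom T \<and> app T (x - y) = app T x - app T y"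
  using is_linop_add[of T x "(-1) *\<^sub>C y"] is_linop_scaleC[of T y "-1"]
  by (simp add: scaleC_minus_one)

lemma is_linop_sum:
  assumes "is_linop T" "finite S" "S \<subseteq> dom T"
  shows "(\<Sum>v\<in>S. u v *\<^sub>C v) \<in> dom T \<and> app T (\<Sum>v\<in>S. u v *\<^sub>C v) = (\<Sum>v\<in>S. u v *\<^sub>C app T v)"
  using assms(2,3)
proof (induction S rule: finite_induct)
  case empty
  then show ?case using assms(1) by (simp add: is_linop_zero is_linop_app_zero)
next
  case (insert x F)
  then have "u x *\<^sub>C x \<in> dom T" "app T (u x *\<^sub>C x) = u x *\<^sub>C app T x"
    using is_linop_scaleC[OF assms(1)] by auto
  with insert show ?case using is_linop_add[OF assms(1)] by simp
qed

lemma is_linop_app_eq_zero_iff: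
  assumes "is_linop T" "inj_on (app T) (dom T)" "x \<in> dom T"
  shows "app T x = 0 \<longleftrightarrow> x = 0"
  using assms is_linop_zero is_linop_app_zero by (metis inj_onD)

lemma c_independent_image:
  assumes T: "is_linop T" "inj_on (app T) (dom T)"
    and S: "finite S" "S \<subseteq> dom T" "c_independent S"
  shows "c_independent (app T ` S)"
  unfolding c_independent_def
proof (intro allI impI)
  fix u assume u: "(\<Sum>w\<in>app T ` S. u w *\<^sub>C w) = 0"
  define x where "x = (\<Sum>v\<in>S. u (app T v) *\<^sub>C v)"
  have x: "x \<in> dom T"
    using is_linop_sum[OF T(1) S(1,2), of "\<lambda>v. u (app T v)"] unfolding x_def by auto
  have "app T x = (\<Sum>v\<in>S. u (app T v) *\<^sub>C app T v)"
    using is_linop_sum[OF T(1) S(1,2), of "\<lambda>v. u (app T v)"] unfolding x_def by auto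
  also have "\<dots> = (\<Sum>w\<in>app T ` S. u w *\<^sub>C w)"
    using sum.reindex[OF inj_on_subset[OF T(2) S(2)], of "\<lambda>w. u w *\<^sub>C w"] by simp
  finally have "x = 0"
    using u is_linop_app_eq_zero_iff[OF T x(1)] by simp
  then have "\<forall>v\<in>S. u (app T v) = 0"
    using S(3)[unfolded c_independent_def, rule_format, of "\<lambda>v. u (app T v)"]
    unfolding x_def by blast
  then show "\<forall>w\<in>app T ` S. u w = 0" by blast
qed

lemma closed_graph_limit_zero:
  assumes "is_linop T" "closed (graph T)"
    and "\<And>n. x n \<in> dom T" "x \<longlonglongrightarrow> 0" "(\<lambda>n. app T (x n)) \<longlonglongrightarrow> \<eta>"
  shows "\<eta> = 0"
proof -
  have "(0, \<eta>) \<in> graph T"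
    using closed_sequentially[OF assms(2), of "\<lambda>n. (x n, app T (x n))"] assms(3)
      tendsto_Pair[OF assms(4,5)]
    by (auto simp: graph_def)
  then show ?thesis
    using is_linop_app_zero[OF assms(1)] by (auto simp: graph_def)
qed

lemma LIMSEQ_zero_if_norm_le:
  fixes x :: "nat \<Rightarrow> 'a::real_normed_vector" and y :: "nat \<Rightarrow> 'b::real_normed_vector"
  assumes "\<And>n. norm (x n) \<le> C * norm (y n)" "y \<longlonglongrightarrow> 0"
  shows "x \<longlonglongrightarrow> 0"
proof (rule Lim_null_comparison)
  show "\<forall>\<^sub>F n in sequentially. norm (x n) \<le> \<bar>C\<bar> * norm (y n)"
    using assms(1) by (smt (verit) always_eventually mult_right_mono norm_ge_zero)
  show "(\<lambda>n. \<bar>C\<bar> * norm (y n)) \<longlonglongrightarrow> 0"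
    using tendsto_mult_right_zero[OF tendsto_norm_zero[OF assms(2)]] by simp
qed

lemma core_approximation:
  assumes "is_core D B" "\<eta> \<in> dom B"
  obtains y where "\<And>n. y n \<in> D" "y \<longlonglongrightarrow> \<eta>" "(\<lambda>n. app B (y n)) \<longlonglongrightarrow> app B \<eta>"
proof -
  have "(\<eta>, app B \<eta>) \<in> closure {(x, app B x) | x. x \<in> D}"
    using assms unfolding is_core_def graph_def by auto
  then obtain s where s: "\<And>n. s n \<in> {(x, app B x) | x. x \<in> D}" "s \<longlonglongrightarrow> (\<eta>, app B \<eta>)"
    unfolding closure_sequential by blast
  have "fst (s n) \<in> D" "snd (s n) = app B (fst (s n))" for n
    using s(1)[of n] by auto
  then show ?thesis
    using that[of "\<lambda>n. fst (s n)"] tendsto_fst[OF s(2)] tendsto_snd[OF s(2)] by simp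
qed

lemma intertwining_shift:
  assumes "intertwining T A B" "\<xi> \<in> dom A"
  shows "app A \<xi> - \<mu> *\<^sub>C \<xi> \<in> dom T"
    and "app T (app A \<xi> - \<mu> *\<^sub>C \<xi>) = app B (app T \<xi>) - \<mu> *\<^sub>C app T \<xi>"
proof -
  have T: "is_linop T" and \<xi>: "\<xi> \<in> dom T" "app A \<xi> \<in> dom T"
    using assms unfolding intertwining_def closed_op_def by auto
  show "app A \<xi> - \<mu> *\<^sub>C \<xi> \<in> dom T"
    "app T (app A \<xi> - \<mu> *\<^sub>C \<xi>) = app B (app T \<xi>) - \<mu> *\<^sub>C app T \<xi>"
    using is_linop_diff[OF T \<xi>(2) is_linop_scaleC[OF T \<xi>(1), THEN conjunct1]]
      is_linop_scaleC[OF T \<xi>(1)] assms unfolding intertwining_def by auto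
qed

lemma intertwining_eigenspace:
  assumes "intertwining T A B" "\<xi> \<in> eigenspace A \<mu>"
  shows "app T \<xi> \<in> eigenspace B \<mu>"
  using intertwining_shift[OF assms(1), of \<xi> \<mu>] assms
  by (auto simp: eigenspace_def intertwining_def closed_op_def is_linop_app_zero)

lemma intertwining_eigenvector:
  assumes "intertwining T A B" "inj_on (app T) (dom T)" "eigenvector A \<mu> \<xi>"
  shows "eigenvector B \<mu> (app T \<xi>)"
proof -
  have "app T \<xi> \<noteq> 0"
    using assms is_linop_app_eq_zero_iff[of T \<xi>]
    unfolding eigenvector_def intertwining_def closed_op_def by auto
  then show ?thesis
    using intertwining_eigenspace[OF assms(1), of \<xi> \<mu>] assms(3)
    by (simp add: eigenvector_def eigenspace_def)
qed

lemma intertwining_point_spectrum_mono: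
  "intertwining T A B \<Longrightarrow> inj_on (app T) (dom T) \<Longrightarrow> point_spectrum A \<subseteq> point_spectrum B"
  unfolding point_spectrum_def by (blast dest: intertwining_eigenvector)

lemma intertwining_multiplicity_mono:
  assumes "intertwining T A B" "inj_on (app T) (dom T)"
  shows "multiplicity A \<mu> \<le> multiplicity B \<mu>"
  unfolding multiplicity_def
proof (rule SUP_mono)
  have T: "is_linop T" "dom A \<subseteq> dom T"
    using assms(1) unfolding intertwining_def closed_op_def by auto
  fix S assume "S \<in> {S. finite S \<and> S \<subseteq> eigenspace A \<mu> \<and> c_independent S}"
  then have S: "finite S" "S \<subseteq> dom T" "S \<subseteq> eigenspace A \<mu>" "c_independent S"
    using T(2) by (auto simp: eigenspace_def)
  have "app T ` S \<subseteq> eigenspace B \<mu>"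
    using intertwining_eigenspace[OF assms(1)] S(3) by blast
  moreover have "card (app T ` S) = card S"
    using card_image[OF inj_on_subset[OF assms(2) S(2)]] .
  ultimately show "\<exists>S'\<in>{S. finite S \<and> S \<subseteq> eigenspace B \<mu> \<and> c_independent S}.
      enat (card S) \<le> enat (card S')"
    using S c_independent_image[OF T(1) assms(2)] by (intro bexI[of _ "app T ` S"]) auto
qed

lemma intertwining_point_spectrum_eq:
  assumes "intertwining T A B" "inj_on (app T) (dom T)" "app T ` dom A = dom B"
  shows "point_spectrum A = point_spectrum B"
proof
  show "point_spectrum B \<subseteq> point_spectrum A"
  proof
    fix \<mu> assume "\<mu> \<in> point_spectrum B"
    then obtain \<eta> where \<eta>: "eigenvector B \<mu> \<eta>"
      unfolding point_spectrum_def by auto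
    then obtain \<xi> where \<xi>: "\<xi> \<in> dom A" "\<eta> = app T \<xi>"
      using assms(3) unfolding eigenvector_def by blast
    have T: "is_linop T" "\<xi> \<in> dom T"
      using assms(1) \<xi>(1) unfolding intertwining_def closed_op_def by auto
    have "app T (app A \<xi> - \<mu> *\<^sub>C \<xi>) = 0" "\<xi> \<noteq> 0"
      using intertwining_shift[OF assms(1) \<xi>(1), of \<mu>] \<eta> \<xi>(2) is_linop_app_zero[OF T(1)]
      by (auto simp: eigenvector_def)
    then have "app A \<xi> - \<mu> *\<^sub>C \<xi> = 0"
      using is_linop_app_eq_zero_iff[OF T(1) assms(2)] intertwining_shift(1)[OF assms(1) \<xi>(1)]
      by blast
    then have "eigenvector A \<mu> \<xi>"
      using \<open>\<xi> \<noteq> 0\<close> \<xi>(1) by (simp add: eigenvector_def)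
    then show "\<mu> \<in> point_spectrum A"
      unfolding point_spectrum_def by blast
  qed
qed (rule intertwining_point_spectrum_mono[OF assms(1,2)])

lemma intertwining_point_spectrum_subset_spectrum:
  assumes T: "intertwining T A B" "inverse_bounded T" and core: "is_core (app T ` dom A) B"
  shows "point_spectrum B \<subseteq> spectrum A"
proof
  fix \<mu> assume "\<mu> \<in> point_spectrum B"
  then obtain \<eta> where \<eta>: "\<eta> \<in> dom B" "\<eta> \<noteq> 0" "app B \<eta> = \<mu> *\<^sub>C \<eta>"
    unfolding point_spectrum_def eigenvector_def by auto
  show "\<mu> \<in> spectrum A"
    unfolding spectrum_def
  proof
    assume "\<mu> \<in> resolvent_set A"
    then obtain C' where C': "\<And>x. x \<in> dom A \<Longrightarrow> norm x \<le> C' * norm (app A x - \<mu> *\<^sub>C x)"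
      unfolding resolvent_set_def by auto
    obtain C where C: "\<And>x. x \<in> dom T \<Longrightarrow> norm x \<le> C * norm (app T x)"
      using T(2) unfolding inverse_bounded_def by auto
    obtain y where y: "\<And>n. y n \<in> app T ` dom A" "y \<longlonglongrightarrow> \<eta>"
      "(\<lambda>n. app B (y n)) \<longlonglongrightarrow> app B \<eta>"
      using core_approximation[OF core \<eta>(1)] by blast
    have "\<forall>n. \<exists>x. x \<in> dom A \<and> y n = app T x"
      using y(1) by blast
    then obtain \<xi> where \<xi>: "\<And>n. \<xi> n \<in> dom A" and y_eq: "\<And>n. y n = app T (\<xi> n)"
      by metis
    have T\<xi>: "(\<lambda>n. app T (\<xi> n)) \<longlonglongrightarrow> \<eta>"
      using y(2) unfolding y_eq .
    have BT\<xi>: "(\<lambda>n. app B (app T (\<xi> n))) \<longlonglongrightarrow> \<mu> *\<^sub>C \<eta>"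
      using y(3) unfolding y_eq \<eta>(3) .
    define z where "z n = app A (\<xi> n) - \<mu> *\<^sub>C \<xi> n" for n
    have z: "z n \<in> dom T" "app T (z n) = app B (app T (\<xi> n)) - \<mu> *\<^sub>C app T (\<xi> n)" for n
      unfolding z_def using intertwining_shift[OF T(1) \<xi>] by blast+
    have "(\<lambda>n. app T (z n)) \<longlonglongrightarrow> \<mu> *\<^sub>C \<eta> - \<mu> *\<^sub>C \<eta>"
      unfolding z(2) by (intro tendsto_diff BT\<xi> bounded_linear.tendsto[OF bounded_linear_scaleC T\<xi>])
    then have "z \<longlonglongrightarrow> 0"
      using LIMSEQ_zero_if_norm_le[of z C "\<lambda>n. app T (z n)"] C[OF z(1)] by simp
    then have "\<xi> \<longlonglongrightarrow> 0"
      using LIMSEQ_zero_if_norm_le[of \<xi> C' z] C'[OF \<xi>] unfolding z_def by blast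
    moreover have "is_linop T" "closed (graph T)" "\<And>n. \<xi> n \<in> dom T"
      using T(1) \<xi> unfolding intertwining_def closed_op_def by auto
    ultimately show False
      using closed_graph_limit_zero[of T \<xi> \<eta>] T\<xi> \<eta>(2) by blast
  qed
qed

theorem proposition2p9:
  fixes A :: "('a::{complex_inner,complete_space}, 'a) linop"
    and B :: "('b::{complex_inner,complete_space}, 'b) linop"
    and T :: "('a, 'b) linop"
  assumes A_cl: "closed_op A" and A_dd: "densely_defined A"
    and B_cl: "closed_op B" and B_dd: "densely_defined B"
    and T_int: "intertwining T A B" and T_inv: "inj_dense_inverse T"
  shows "point_spectrum A \<subseteq> point_spectrum B
      \<and> (\<forall>\<xi> \<mu>. eigenvector A \<mu> \<xi> \<longrightarrow> eigenvector B \<mu> (app T \<xi>))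
      \<and> (\<forall>\<mu>\<in>point_spectrum A. multiplicity A \<mu> \<le> multiplicity B \<mu>)
      \<and> (app T ` dom A = dom B \<and> inverse_bounded T \<longrightarrow> point_spectrum A = point_spectrum B)
      \<and> (inverse_bounded T \<and> is_core (app T ` dom A) B \<longrightarrow> point_spectrum B \<subseteq> spectrum A)"
proof -
  have inj: "inj_on (app T) (dom T)"
    using T_inv unfolding inj_dense_inverse_def by blast
  show ?thesis
    using intertwining_point_spectrum_mono[OF T_int inj]
      intertwining_eigenvector[OF T_int inj]
      intertwining_multiplicity_mono[OF T_int inj]
      intertwining_point_spectrum_eq[OF T_int inj]
      intertwining_point_spectrum_subset_spectrum[OF T_int]
    by simp
qed

end
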